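(* Let $M$ be a complex manifold and $z\in M$. If $M$ is hyperbolic at $z$, then there is a neighborhood $W$ of $z$ such that $M$ is hyperbolic at every $z'\in W$.
   Context: $\mathbb D\subset\mathbb C$ is the open unit disc. For $z,w\in M$: $\tilde k^\ast_M(z,w)=\inf\{|\alpha|:\exists f\in\mathcal O(\mathbb D,M),\ f(0)=z,\ f(\alpha)=w\}$, $\tilde k_M=\tanh^{-1}\tilde k^\ast_M$; the Kobayashi pseudodistance is $k_M(z,w)=\inf_{m\in\mathbb N}\inf\{\sum_{j=1}^m\tilde k_M(z_{j-1},z_j): z_0,\dots,z_m\in M,\ z_0=z,\ z_m=w\}$. $M$ is hyperbolic at $z$ if $k_M(z,w)>0$ for every $w\in M\setminus\{z\}$. *)

theory Defs
  imports "HOL-Analysis.Analysis"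
begin

definition holo_vec_on :: "(complex ^ 'n) set \<Rightarrow> (complex ^ 'n \<Rightarrow> complex ^ 'm) \<Rightarrow> bool" where
  "holo_vec_on S g \<longleftrightarrow> open S \<and> (\<forall>x\<in>S. \<exists>D. (g has_derivative D) (at x) \<and>
       (\<forall>(c::complex) v. D (c *s v) = c *s D v))"

text \<open>A holomorphic atlas of complex dimension CARD('n) on the topological space
  (the whole type) 'a: charts are homeomorphisms of open sets onto open subsets of C^n,
  the chart domains cover, and all transition maps are holomorphic.\<close>
definition complex_atlas :: "('a::topological_space set \<times> ('a \<Rightarrow> complex ^ 'n)) set \<Rightarrow> bool" where
  "complex_atlas A \<longleftrightarrow>
     (\<forall>(U,\<phi>)\<in>A. open U \<and> open (\<phi> ` U) \<and> (\<exists>\<psi>. homeomorphism U (\<phi> ` U) \<phi> \<psi>)) \<and>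
     \<Union> (fst ` A) = UNIV \<and>
     (\<forall>(U,\<phi>)\<in>A. \<forall>(V,\<psi>)\<in>A. holo_vec_on (\<phi> ` (U \<inter> V)) (\<psi> \<circ> inv_into U \<phi>))"

definition holo_disc :: "('a::topological_space set \<times> ('a \<Rightarrow> complex ^ 'n)) set \<Rightarrow> (complex \<Rightarrow> 'a) \<Rightarrow> bool" where
  "holo_disc A f \<longleftrightarrow> continuous_on (ball 0 1) f \<and>
     (\<forall>(U,\<phi>)\<in>A. \<forall>i. (\<lambda>t. \<phi> (f t) $ i) holomorphic_on (ball 0 1 \<inter> f -` U))"

text \<open>Lempert-type function k~*_M; inf of the empty set is +infinity.\<close>
definition kstar :: "('a::topological_space set \<times> ('a \<Rightarrow> complex ^ 'n)) set \<Rightarrow> 'a \<Rightarrow> 'a \<Rightarrow> ereal" where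
  "kstar A z w = Inf {ereal (cmod \<alpha>) | \<alpha> f. \<alpha> \<in> ball 0 1 \<and> holo_disc A f \<and> f 0 = z \<and> f \<alpha> = w}"

definition ktilde :: "('a::topological_space set \<times> ('a \<Rightarrow> complex ^ 'n)) set \<Rightarrow> 'a \<Rightarrow> 'a \<Rightarrow> ereal" where
  "ktilde A z w = (if kstar A z w < 1 then ereal (artanh (real_of_ereal (kstar A z w))) else \<infinity>)"

definition kobayashi :: "('a::topological_space set \<times> ('a \<Rightarrow> complex ^ 'n)) set \<Rightarrow> 'a \<Rightarrow> 'a \<Rightarrow> ereal" where
  "kobayashi A z w = Inf {(\<Sum>j\<in>{1..m}. ktilde A (zs (j - 1)) (zs j)) | (m::nat) (zs::nat \<Rightarrow> 'a).
       zs 0 = z \<and> zs m = w}"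

definition hyperbolic_at :: "('a::topological_space set \<times> ('a \<Rightarrow> complex ^ 'n)) set \<Rightarrow> 'a \<Rightarrow> bool" where
  "hyperbolic_at A z \<longleftrightarrow> (\<forall>w. w \<noteq> z \<longrightarrow> kobayashi A z w > 0)"

end

theory Submission
  imports Defs
begin

(* Fix a chart (U, phi) around z with the closed ball of radius 4R about p = phi z inside phi(U),
   and let B, C be the preimages of the open and the closed ball of radius 2R.
   (1) A straight disc in the chart shows that nearby chart points are close for the Kobayashi
       pseudodistance k; hence k(z, -) is locally bounded below in the chart, and compactness of
       the sphere gives a barrier: k(z, x) >= delta > 0 on C - B.
   (2) Confinement: a disc starting at a point x of B with k(z, x) < delta/2 cannot leave B within
       radius rho = min (1/2) (delta/4), since the exit point would be too close to z.  Inductively,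
       every chain of discs of small total length starting near z stays in B.
   (3) Transport: for z' near z, translate a short chain from z' to w by d = p - phi z' in the chart
       and rescale its discs by rho.  This yields a chain from z to phi^-1(phi w + d) whose length is
       at most 4/rho times the original one; as z is hyperbolic, short chains from z' to w != z'
       cannot exist, i.e. z' is hyperbolic. *)

lemma artanh_mono_real:
  fixes x y :: real assumes "0 \<le> x" "x \<le> y" "y < 1"
  shows "artanh x \<le> artanh y"
proof -
  have "(1+x)/(1-x) \<le> (1+y)/(1-y)" using assms by (simp add: divide_simps) (simp add: algebra_simps)
  moreover have "0 < (1+x)/(1-x)" using assms by simp
  ultimately show ?thesis unfolding artanh_def by simp
qed

lemma artanh_nonneg_real: fixes x :: real assumes "0 \<le> x" "x < 1" shows "0 \<le> artanh x"
  using artanh_mono_real[of 0 x] assms by simp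

lemma artanh_le_2x:
  fixes x :: real assumes "0 \<le> x" "x \<le> 1/2"
  shows "artanh x \<le> 2 * x"
proof -
  have pos: "0 < (1+x)/(1-x)" using assms by simp
  have "ln ((1+x)/(1-x)) \<le> (1+x)/(1-x) - 1" using ln_le_minus_one[OF pos] .
  also have "\<dots> = 2*x/(1-x)" using assms by (simp add: field_simps)
  also have "\<dots> \<le> 4*x" using assms by (simp add: divide_simps) (simp add: algebra_simps mult_left_le)
  finally show ?thesis unfolding artanh_def by simp
qed

lemma artanh_ge_half:
  fixes x :: real assumes "0 \<le> x" "x < 1"
  shows "x / 2 \<le> artanh x"
proof -
  have pos: "0 < (1-x)/(1+x)" using assms by simp
  have "ln ((1-x)/(1+x)) \<le> (1-x)/(1+x) - 1" using ln_le_minus_one[OF pos] .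
  moreover have "ln ((1-x)/(1+x)) = - ln ((1+x)/(1-x))" using assms
    by (simp add: ln_div)
  moreover have "(1-x)/(1+x) - 1 = - 2*x/(1+x)" using assms by (simp add: field_simps)
  moreover have "2*x/(1+x) \<ge> x" using assms by (simp add: divide_simps) (simp add: algebra_simps mult_left_le)
  ultimately show ?thesis unfolding artanh_def by simp
qed

lemma kstar_nonneg: "0 \<le> kstar A x y"
  unfolding kstar_def by (rule Inf_greatest) auto

lemma ktilde_nonneg: "0 \<le> ktilde A x y"
proof (cases "kstar A x y < 1")
  case True
  have k0: "0 \<le> kstar A x y" by (rule kstar_nonneg)
  then obtain r where r: "kstar A x y = ereal r" using True
    by (cases "kstar A x y") auto
  with k0 True have "0 \<le> r" "r < 1" by auto
  then show ?thesis using True r by (simp add: ktilde_def artanh_nonneg_real)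
qed (simp add: ktilde_def)

lemma ktilde_le_disc:
  assumes "holo_disc A f" "\<alpha> \<in> ball 0 1" "f 0 = x" "f \<alpha> = y"
  shows "ktilde A x y \<le> ereal (artanh (cmod \<alpha>))"
proof -
  have a1: "cmod \<alpha> < 1" using assms(2) by simp
  have "kstar A x y \<le> ereal (cmod \<alpha>)"
    unfolding kstar_def by (rule Inf_lower) (use assms in blast)
  moreover have k0: "0 \<le> kstar A x y" by (rule kstar_nonneg)
  ultimately obtain r where r: "kstar A x y = ereal r" "0 \<le> r" "r \<le> cmod \<alpha>"
    by (cases "kstar A x y") auto
  then show ?thesis using a1
    by (simp add: ktilde_def artanh_mono_real)
qed

lemma disc_of_ktilde_less:
  assumes "ktilde A x y < ereal e"
  shows "\<exists>\<alpha> f. \<alpha> \<in> ball 0 1 \<and> holo_disc A f \<and> f 0 = x \<and> f \<alpha> = y \<and> artanh (cmod \<alpha>) < e"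
proof -
  have kl: "kstar A x y < 1" using assms by (auto simp: ktilde_def split: if_splits)
  have k0: "0 \<le> kstar A x y" by (rule kstar_nonneg)
  obtain k where k: "kstar A x y = ereal k" using kl k0 by (cases "kstar A x y") auto
  have k01: "0 \<le> k" "k < 1" using k kl k0 by auto
  have ak: "artanh k < e" using assms kl k by (simp add: ktilde_def)
  define e' where "e' = (artanh k + e) / 2"
  have e'1: "artanh k < e'" "e' < e" using ak by (auto simp: e'_def)
  have "k < tanh e'"
  proof (rule ccontr)
    assume "\<not> k < tanh e'"
    then have "tanh e' \<le> k" by simp
    moreover have "0 \<le> tanh e'" using e'1 artanh_nonneg_real[OF k01] by simp
    ultimately have "artanh (tanh e') \<le> artanh k" using artanh_mono_real k01 by blast
    then show False using e'1 by (simp add: artanh_tanh_real)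
  qed
  then have "kstar A x y < ereal (tanh e')" using k by simp
  then obtain u where u: "u \<in> {ereal (cmod \<alpha>) | \<alpha> f. \<alpha> \<in> ball 0 1 \<and> holo_disc A f \<and> f 0 = x \<and> f \<alpha> = y}"
    "u < ereal (tanh e')"
    unfolding kstar_def by (auto simp: Inf_less_iff)
  then obtain \<alpha> f where disc: "u = ereal (cmod \<alpha>)" "\<alpha> \<in> ball 0 1" "holo_disc A f" "f 0 = x" "f \<alpha> = y"
    by blast
  have "cmod \<alpha> < tanh e'" using u disc by simp
  then have "artanh (cmod \<alpha>) \<le> artanh (tanh e')"
    by (intro artanh_mono_real) (auto simp: tanh_real_lt_1)
  then have "artanh (cmod \<alpha>) < e" using e'1 by (simp add: artanh_tanh_real)
  then show ?thesis using disc by blast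
qed

lemma kobayashi_le_chain:
  fixes m :: nat
  assumes "zs 0 = x" "zs m = y"
  shows "kobayashi A x y \<le> (\<Sum>j\<in>{1..m}. ktilde A (zs (j - 1)) (zs j))"
  unfolding kobayashi_def
  by (rule Inf_lower, rule CollectI, rule exI[of _ m], rule exI[of _ zs]) (use assms in simp)

lemma kobayashi_le_ktilde: "kobayashi A x y \<le> ktilde A x y"
  using kobayashi_le_chain[of "\<lambda>j. if j = 0 then x else y" x 1 y A] by simp

lemma kobayashi_extend_less:
  assumes "kobayashi A x w < ereal a" "ktilde A w y \<le> ereal b"
  shows "kobayashi A x y < ereal (a + b)"
proof -
  from assms(1) obtain c where "c \<in> {(\<Sum>j\<in>{1..m}. ktilde A (zs (j - 1)) (zs j)) | (m::nat) zs.
       zs 0 = x \<and> zs m = w}" "c < ereal a"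
    unfolding kobayashi_def by (auto simp: Inf_less_iff)
  then obtain m :: nat and zs where c: "c = (\<Sum>j\<in>{1..m}. ktilde A (zs (j - 1)) (zs j))" "zs 0 = x" "zs m = w"
    by blast
  define zs' where "zs' = zs(Suc m := y)"
  have "kobayashi A x y \<le> (\<Sum>j\<in>{1..Suc m}. ktilde A (zs' (j - 1)) (zs' j))"
    by (rule kobayashi_le_chain) (auto simp: zs'_def c)
  also have "\<dots> = (\<Sum>j\<in>{1..m}. ktilde A (zs' (j - 1)) (zs' j)) + ktilde A (zs' m) (zs' (Suc m))"
    by (simp add: sum.atLeast1_atMost_eq)
  also have "(\<Sum>j\<in>{1..m}. ktilde A (zs' (j - 1)) (zs' j)) = c"
    unfolding c zs'_def by (rule sum.cong) auto
  also have "ktilde A (zs' m) (zs' (Suc m)) = ktilde A w y" using c by (simp add: zs'_def)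
  finally have le: "kobayashi A x y \<le> c + ktilde A w y" .
  have c0: "0 \<le> c" unfolding c by (auto intro!: sum_nonneg ktilde_nonneg)
  have t0: "0 \<le> ktilde A w y" by (rule ktilde_nonneg)
  obtain c' where c': "c = ereal c'" using c0 \<open>c < ereal a\<close> by (cases c) auto
  obtain t' where t': "ktilde A w y = ereal t'" using t0 assms(2) by (cases "ktilde A w y") auto
  have "c + ktilde A w y < ereal (a + b)"
    using c' t' \<open>c < ereal a\<close> assms(2) by simp
  with le show ?thesis by simp
qed

definition disc_chain ::
    "('a::topological_space set \<times> ('a \<Rightarrow> complex ^ 'n)) set \<Rightarrow> nat \<Rightarrow> (nat \<Rightarrow> 'a) \<Rightarrow>
      (nat \<Rightarrow> complex \<Rightarrow> 'a) \<Rightarrow> (nat \<Rightarrow> complex) \<Rightarrow> bool" where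
  "disc_chain A m xs f \<alpha> \<longleftrightarrow>
     (\<forall>j\<in>{1..m}. \<alpha> j \<in> ball 0 1 \<and> holo_disc A (f j) \<and> f j 0 = xs (j - 1) \<and> f j (\<alpha> j) = xs j)"

lemma kobayashi_le_disc_chain:
  fixes m :: nat
  assumes "disc_chain A m xs f \<alpha>"
  shows "kobayashi A (xs 0) (xs m) \<le> ereal (\<Sum>j\<in>{1..m}. artanh (cmod (\<alpha> j)))"
proof -
  have "kobayashi A (xs 0) (xs m) \<le> (\<Sum>j\<in>{1..m}. ktilde A (xs (j - 1)) (xs j))"
    by (rule kobayashi_le_chain) auto
  also have "\<dots> \<le> (\<Sum>j\<in>{1..m}. ereal (artanh (cmod (\<alpha> j))))"
  proof (rule sum_mono)
    fix j assume "j \<in> {1..m}"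
    then show "ktilde A (xs (j - 1)) (xs j) \<le> ereal (artanh (cmod (\<alpha> j)))"
      using assms by (intro ktilde_le_disc[where f="f j"]) (auto simp: disc_chain_def)
  qed
  finally show ?thesis by simp
qed

lemma disc_chain_of_short_point_chain:
  fixes m :: nat
  assumes short: "(\<Sum>j\<in>{1..m}. ktilde A (zs (j - 1)) (zs j)) < ereal c"
  shows "\<exists>f \<alpha>. disc_chain A m zs f \<alpha> \<and> (\<Sum>j\<in>{1..m}. artanh (cmod (\<alpha> j))) < c"
proof -
  define r where "r j = real_of_ereal (ktilde A (zs (j - 1)) (zs j))" for j
  have finite_step: "ktilde A (zs (j - 1)) (zs j) = ereal (r j)" if "j \<in> {1..m}" for j
  proof -
    have "ktilde A (zs (j - 1)) (zs j) \<noteq> \<infinity>"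
    proof
      assume "ktilde A (zs (j - 1)) (zs j) = \<infinity>"
      then have "(\<Sum>j\<in>{1..m}. ktilde A (zs (j - 1)) (zs j)) = \<infinity>"
        using that by (subst sum_Pinfty) auto
      then show False using short by simp
    qed
    moreover have "0 \<le> ktilde A (zs (j - 1)) (zs j)" by (rule ktilde_nonneg)
    ultimately show ?thesis unfolding r_def by (cases "ktilde A (zs (j - 1)) (zs j)") auto
  qed
  have "(\<Sum>j\<in>{1..m}. ktilde A (zs (j - 1)) (zs j)) = ereal (\<Sum>j\<in>{1..m}. r j)"
    using finite_step by simp
  then have sum_r: "(\<Sum>j\<in>{1..m}. r j) < c" using short by simp
  define \<eta> where "\<eta> = (c - (\<Sum>j\<in>{1..m}. r j)) / (real m + 1)"
  have \<eta>: "0 < \<eta>" using sum_r by (simp add: \<eta>_def)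
  have "\<forall>j\<in>{1..m}. \<exists>\<alpha> g. \<alpha> \<in> ball 0 1 \<and> holo_disc A g \<and> g 0 = zs (j - 1) \<and> g \<alpha> = zs j
      \<and> artanh (cmod \<alpha>) < r j + \<eta>"
  proof
    fix j assume "j \<in> {1..m}"
    then have "ktilde A (zs (j - 1)) (zs j) < ereal (r j + \<eta>)" using finite_step \<eta> by simp
    then show "\<exists>\<alpha> g. \<alpha> \<in> ball 0 1 \<and> holo_disc A g \<and> g 0 = zs (j - 1) \<and> g \<alpha> = zs j
        \<and> artanh (cmod \<alpha>) < r j + \<eta>" by (rule disc_of_ktilde_less)
  qed
  then obtain \<alpha> f where discs: "\<forall>j\<in>{1..m}. \<alpha> j \<in> ball 0 1 \<and> holo_disc A (f j) \<and> f j 0 = zs (j - 1)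
      \<and> f j (\<alpha> j) = zs j \<and> artanh (cmod (\<alpha> j)) < r j + \<eta>"
    by metis
  have "(\<Sum>j\<in>{1..m}. artanh (cmod (\<alpha> j))) \<le> (\<Sum>j\<in>{1..m}. r j + \<eta>)"
    by (rule sum_mono) (use discs in fastforce)
  also have "\<dots> = (\<Sum>j\<in>{1..m}. r j) + real m * \<eta>" by (simp add: sum.distrib)
  also have "\<dots> < (\<Sum>j\<in>{1..m}. r j) + (real m + 1) * \<eta>" using \<eta> by simp
  also have "\<dots> = c" unfolding \<eta>_def by simp
  finally show ?thesis using discs unfolding disc_chain_def by blast
qed

lemma kobayashi_ge_of_chains:
  assumes no_short_chain: "\<And>(m::nat) xs f \<alpha>. xs 0 = x \<Longrightarrow> xs m = y \<Longrightarrow> disc_chain A m xs f \<alpha> \<Longrightarrow>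
     (\<Sum>j\<in>{1..m}. artanh (cmod (\<alpha> j))) < c \<Longrightarrow> False"
  shows "ereal c \<le> kobayashi A x y"
  unfolding kobayashi_def
proof (rule Inf_greatest)
  fix u assume "u \<in> {(\<Sum>j\<in>{1..m}. ktilde A (zs (j - 1)) (zs j)) | (m::nat) (zs::nat \<Rightarrow> 'a).
       zs 0 = x \<and> zs m = y}"
  then obtain m :: nat and zs where u: "u = (\<Sum>j\<in>{1..m}. ktilde A (zs (j - 1)) (zs j))"
    and ends: "zs 0 = x" "zs m = y"
    by blast
  show "ereal c \<le> u"
  proof (rule ccontr)
    assume "\<not> ereal c \<le> u"
    then obtain f \<alpha> where "disc_chain A m zs f \<alpha>" "(\<Sum>j\<in>{1..m}. artanh (cmod (\<alpha> j))) < c"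
      using disc_chain_of_short_point_chain[of A zs m c] u by (auto simp: not_le)
    then show False using no_short_chain ends by blast
  qed
qed

lemma disc_radius_le_chain_length:
  fixes m :: nat
  assumes "disc_chain A m xs f \<alpha>" and "j \<in> {1..m}"
  shows "cmod (\<alpha> j) \<le> 2 * (\<Sum>i\<in>{1..m}. artanh (cmod (\<alpha> i)))"
proof -
  have "cmod (\<alpha> j) / 2 \<le> artanh (cmod (\<alpha> j))"
    using assms by (intro artanh_ge_half) (auto simp: disc_chain_def)
  also have "\<dots> \<le> (\<Sum>i\<in>{1..m}. artanh (cmod (\<alpha> i)))"
    using assms by (intro member_le_sum artanh_nonneg_real) (auto simp: disc_chain_def)
  finally show ?thesis by simp
qed

lemma vec_has_derivative_of_components:
  fixes G :: "complex \<Rightarrow> complex^'n"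
  assumes "\<And>i. ((\<lambda>t. G t $ i) has_field_derivative g' i) (at t)"
  shows "(G has_derivative (\<lambda>s. s *s (\<chi> i. g' i))) (at t)"
proof -
  have "\<forall>b\<in>Basis. ((\<lambda>x. G x \<bullet> b) has_derivative (\<lambda>x. (x *s (\<chi> i. g' i)) \<bullet> b)) (at t)"
  proof
    fix b :: "complex^'n" assume "b \<in> Basis"
    then obtain i u where b: "b = axis i u" "u \<in> Basis" by (auto simp: Basis_vec_def)
    have "((\<lambda>x. G x $ i \<bullet> u) has_derivative (\<lambda>x. (x * g' i) \<bullet> u)) (at t)"
      using bounded_linear.has_derivative[OF bounded_linear_inner_left assms[of i, unfolded has_field_derivative_def]]
      by (simp add: mult.commute)
    then show "((\<lambda>x. G x \<bullet> b) has_derivative (\<lambda>x. (x *s (\<chi> i. g' i)) \<bullet> b)) (at t)"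
      by (simp add: b inner_axis)
  qed
  then show ?thesis by (subst has_derivative_componentwise_within)
qed

lemma vec_holomorphic_derivative:
  fixes G :: "complex \<Rightarrow> complex^'n"
  assumes "open T" "t \<in> T" "\<And>i. (\<lambda>t. G t $ i) holomorphic_on T"
  shows "\<exists>v. (G has_derivative (\<lambda>s. s *s v)) (at t)"
proof -
  have "\<forall>i. \<exists>d. ((\<lambda>t. G t $ i) has_field_derivative d) (at t)"
    using assms holomorphic_on_imp_differentiable_at field_differentiable_def by blast
  then obtain g' where "\<And>i. ((\<lambda>t. G t $ i) has_field_derivative g' i) (at t)" by metis
  then show ?thesis using vec_has_derivative_of_components by blast
qed

lemma vec_holomorphic_continuous:
  fixes G :: "complex \<Rightarrow> complex^'n"
  assumes "open T" "\<And>i. (\<lambda>t. G t $ i) holomorphic_on T"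
  shows "continuous_on T G"
proof (rule continuous_at_imp_continuous_on, rule ballI)
  fix t assume "t \<in> T"
  then obtain v where "(G has_derivative (\<lambda>s. s *s v)) (at t)" using vec_holomorphic_derivative assms by blast
  then show "isCont G t" using has_derivative_continuous by blast
qed

lemma chart_props:
  assumes atlas: "complex_atlas A" and UA: "(U,\<phi>) \<in> A"
  shows "open U" "open (\<phi> ` U)" "inj_on \<phi> U" "continuous_on U \<phi>"
    "continuous_on (\<phi> ` U) (inv_into U \<phi>)"
    "\<And>x. x \<in> U \<Longrightarrow> inv_into U \<phi> (\<phi> x) = x"
    "\<And>q. q \<in> \<phi> ` U \<Longrightarrow> inv_into U \<phi> q \<in> U \<and> \<phi> (inv_into U \<phi> q) = q"
proof -
  from atlas UA have o: "open U" "open (\<phi> ` U)" and "\<exists>\<psi>. homeomorphism U (\<phi> ` U) \<phi> \<psi>"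
    unfolding complex_atlas_def by auto
  then obtain \<psi> where h: "homeomorphism U (\<phi> ` U) \<phi> \<psi>" by blast
  have inv: "\<And>x. x \<in> U \<Longrightarrow> \<psi> (\<phi> x) = x" using h by (simp add: homeomorphism_def)
  show inj: "inj_on \<phi> U" by (metis inj_onI inv)
  show "open U" "open (\<phi> ` U)" by fact+
  show "continuous_on U \<phi>" using h by (simp add: homeomorphism_def)
  show li: "\<And>x. x \<in> U \<Longrightarrow> inv_into U \<phi> (\<phi> x) = x" using inj by simp
  have eq: "\<And>q. q \<in> \<phi> ` U \<Longrightarrow> inv_into U \<phi> q = \<psi> q" using inv li by auto
  have "continuous_on (\<phi> ` U) \<psi>" using h by (simp add: homeomorphism_def)
  then show "continuous_on (\<phi> ` U) (inv_into U \<phi>)" using continuous_on_cong eq by force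
  show "\<And>q. q \<in> \<phi> ` U \<Longrightarrow> inv_into U \<phi> q \<in> U \<and> \<phi> (inv_into U \<phi> q) = q"
    by (auto simp: inv_into_into f_inv_into_f)
qed

lemma chart_image_iff:
  assumes atlas: "complex_atlas A" and UA: "(U,\<phi>) \<in> A" and S: "S \<subseteq> \<phi> ` U"
  shows "x \<in> inv_into U \<phi> ` S \<longleftrightarrow> x \<in> U \<and> \<phi> x \<in> S"
proof
  assume "x \<in> inv_into U \<phi> ` S"
  then obtain q where "q \<in> S" "x = inv_into U \<phi> q" by auto
  then show "x \<in> U \<and> \<phi> x \<in> S" using chart_props(7)[OF atlas UA] S by auto
next
  assume "x \<in> U \<and> \<phi> x \<in> S"
  then show "x \<in> inv_into U \<phi> ` S" using chart_props(6)[OF atlas UA] by (metis image_eqI)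
qed

lemma chart_image_open:
  assumes atlas: "complex_atlas A" and UA: "(U,\<phi>) \<in> A" and S: "S \<subseteq> \<phi> ` U" "open S"
  shows "open (inv_into U \<phi> ` S)"
proof -
  have "inv_into U \<phi> ` S = \<phi> -` S \<inter> U" using chart_image_iff[OF atlas UA S(1)] by blast
  moreover have "open (\<phi> -` S \<inter> U)"
    using chart_props(1,4)[OF atlas UA] S(2) continuous_on_open_vimage by blast
  ultimately show ?thesis by simp
qed

text \<open>A holomorphic disc in a chart image, composed with the inverse chart, is a holomorphic disc
  in the manifold: this is where the holomorphy of the transition maps enters.\<close>

lemma chart_transition_holomorphic:
  fixes G :: "complex \<Rightarrow> complex^'n"
  assumes atlas: "complex_atlas A" and UA: "(U,\<phi>) \<in> A" and VA: "(V,\<theta>) \<in> A"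
  and T: "open T" and GT: "\<And>t. t \<in> T \<Longrightarrow> G t \<in> \<phi> ` U"
  and Gh: "\<And>i. (\<lambda>t. G t $ i) holomorphic_on T"
  shows "(\<lambda>t. \<theta> (inv_into U \<phi> (G t)) $ i) holomorphic_on (T \<inter> (\<lambda>t. inv_into U \<phi> (G t)) -` V)"
proof (rule holomorphic_onI)
  fix t assume t: "t \<in> T \<inter> (\<lambda>t. inv_into U \<phi> (G t)) -` V"
  have cf: "inv_into U \<phi> (G t) \<in> U \<and> \<phi> (inv_into U \<phi> (G t)) = G t"
    using chart_props(7)[OF atlas UA] GT t by blast
  have q: "G t \<in> \<phi> ` (U \<inter> V)" using cf t by (metis IntD2 IntI image_eqI vimageE)
  have "holo_vec_on (\<phi> ` (U \<inter> V)) (\<theta> \<circ> inv_into U \<phi>)"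
    using atlas UA VA unfolding complex_atlas_def by fast
  then obtain D where D: "((\<theta> \<circ> inv_into U \<phi>) has_derivative D) (at (G t))"
    "\<And>(c::complex) v. D (c *s v) = c *s D v"
    using q unfolding holo_vec_on_def by blast
  obtain v where v: "(G has_derivative (\<lambda>s. s *s v)) (at t)"
    using vec_holomorphic_derivative[OF T _ Gh] t by blast
  have "((\<theta> \<circ> inv_into U \<phi>) \<circ> G has_derivative D \<circ> (\<lambda>s. s *s v)) (at t)"
    by (rule diff_chain_at[OF v D(1)])
  from bounded_linear.has_derivative[OF bounded_linear_vec_nth this, of i]
  have "((\<lambda>t. ((\<theta> \<circ> inv_into U \<phi>) \<circ> G) t $ i) has_derivative (\<lambda>s. (D (s *s v)) $ i)) (at t)"
    by (simp add: o_def)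
  also have "(\<lambda>s. (D (s *s v)) $ i) = (\<lambda>s. (D v $ i) * s)" using D(2) by (simp add: mult.commute)
  finally have "((\<lambda>t. \<theta> (inv_into U \<phi> (G t)) $ i) has_field_derivative (D v $ i)) (at t)"
    by (simp add: has_field_derivative_def o_def)
  then show "(\<lambda>t. \<theta> (inv_into U \<phi> (G t)) $ i) field_differentiable
      at t within T \<inter> (\<lambda>t. inv_into U \<phi> (G t)) -` V"
    using field_differentiable_at_within field_differentiable_def by blast
qed

lemma holo_disc_through_chart:
  fixes G :: "complex \<Rightarrow> complex^'n"
  assumes atlas: "complex_atlas A" and UA: "(U,\<phi>) \<in> A"
  and GT: "\<And>t. t \<in> ball 0 1 \<Longrightarrow> G t \<in> \<phi> ` U"
  and Gh: "\<And>i. (\<lambda>t. G t $ i) holomorphic_on ball 0 1"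
  shows "holo_disc A (\<lambda>t. inv_into U \<phi> (G t))"
proof -
  have "continuous_on (ball 0 1) G" by (rule vec_holomorphic_continuous[OF _ Gh]) simp
  then have c: "continuous_on (ball 0 1) (\<lambda>t. inv_into U \<phi> (G t))"
    by (rule continuous_on_compose2[OF chart_props(5)[OF atlas UA]]) (use GT in auto)
  have h: "\<forall>(V,\<theta>)\<in>A. \<forall>i. (\<lambda>t. \<theta> (inv_into U \<phi> (G t)) $ i) holomorphic_on (ball 0 1 \<inter> (\<lambda>t. inv_into U \<phi> (G t)) -` V)"
    using chart_transition_holomorphic[OF atlas UA _ _ GT Gh] by auto
  show ?thesis unfolding holo_disc_def using c h by simp
qed

lemma norm_vector_smult: "norm (c *s (v::complex^'n)) = cmod c * norm v"
  by (simp add: norm_vec_def L2_set_def norm_mult power_mult_distrib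
      sum_distrib_left[symmetric] real_sqrt_mult)

text \<open>Nearby chart points are Lempert-close: the straight disc through q1 and q2 of radius
  rho shows ktilde <= artanh (dist/rho) <= 2 dist/rho.\<close>

lemma ktilde_chart_bound:
  fixes q1 q2 :: "complex^'n"
  assumes atlas: "complex_atlas A" and UA: "(U,\<phi>) \<in> A"
  and \<rho>: "0 < \<rho>" and cb: "cball q1 \<rho> \<subseteq> \<phi> ` U" and d: "dist q1 q2 \<le> \<rho>/2"
  shows "ktilde A (inv_into U \<phi> q1) (inv_into U \<phi> q2) \<le> ereal (2 * dist q1 q2 / \<rho>)"
proof (cases "q1 = q2")
  case True
  have q1: "q1 \<in> \<phi> ` U" using cb \<rho> by auto
  have hd: "holo_disc A (\<lambda>t. inv_into U \<phi> ((\<lambda>_. q1) t))"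
    by (rule holo_disc_through_chart[OF atlas UA]) (use q1 in auto)
  have "ktilde A (inv_into U \<phi> q1) (inv_into U \<phi> q2) \<le> ereal (artanh (cmod 0))"
    by (rule ktilde_le_disc[OF hd]) (use True in auto)
  then show ?thesis using True by simp
next
  case False
  define a where "a = dist q1 q2 / \<rho>"
  have a0: "0 < a" "a \<le> 1/2" using False \<rho> d by (auto simp: a_def field_simps)
  define G where "G t = q1 + (t / of_real a) *s (q2 - q1)" for t
  have GT: "G t \<in> \<phi> ` U" if "t \<in> ball 0 1" for t
  proof -
    have "norm ((t / of_real a) *s (q2 - q1)) = cmod t / a * dist q1 q2"
      using a0 by (simp only: norm_vector_smult norm_divide) (simp add: dist_norm norm_minus_commute)
    also have "\<dots> = cmod t * \<rho>" using a0 \<rho> False by (simp add: a_def)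
    also have "\<dots> \<le> \<rho>" using that \<rho> by simp
    finally have "G t \<in> cball q1 \<rho>" unfolding G_def mem_cball dist_norm by (simp add: norm_minus_commute)
    then show ?thesis using cb by blast
  qed
  have Gh: "(\<lambda>t. G t $ i) holomorphic_on ball 0 1" for i
    unfolding G_def by (simp add: holomorphic_intros)
  have hd: "holo_disc A (\<lambda>t. inv_into U \<phi> (G t))"
    by (rule holo_disc_through_chart[OF atlas UA GT Gh])
  have G0: "G 0 = q1" by (simp add: G_def)
  have Ga: "G (of_real a) = q2" using a0 by (simp add: G_def)
  have "ktilde A (inv_into U \<phi> q1) (inv_into U \<phi> q2) \<le> ereal (artanh (cmod (of_real a)))"
    by (rule ktilde_le_disc[OF hd]) (use a0 G0 Ga in auto)
  also have "artanh (cmod (of_real a)) \<le> 2 * a" using a0 by (simp add: artanh_le_2x)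
  finally show ?thesis by (simp add: a_def)
qed

lemma holo_disc_rescale_translate:
  fixes d :: "complex^'n"
  assumes atlas: "complex_atlas A" and UA: "(U,\<phi>) \<in> A" and hf: "holo_disc A f"
  and r: "0 < r" "r \<le> 1"
  and fU: "\<And>t. cmod t < r \<Longrightarrow> f t \<in> U"
  and fT: "\<And>t. cmod t < r \<Longrightarrow> \<phi> (f t) + d \<in> \<phi> ` U"
  shows "holo_disc A (\<lambda>t. inv_into U \<phi> (\<phi> (f (of_real r * t)) + d))"
proof (rule holo_disc_through_chart[OF atlas UA])
  fix t :: complex assume "t \<in> ball 0 1"
  then have "cmod (of_real r * t) < r" using r by (simp add: norm_mult)
  then show "\<phi> (f (of_real r * t)) + d \<in> \<phi> ` U" using fT by blast
next
  fix i
  have h1: "(\<lambda>s. \<phi> (f s) $ i) holomorphic_on (ball 0 1 \<inter> f -` U)"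
    using hf UA unfolding holo_disc_def by fast
  have h2: "(\<lambda>t. of_real r * t) holomorphic_on ball 0 1" by (simp add: holomorphic_intros)
  have sub: "(\<lambda>t. of_real r * t) ` ball 0 1 \<subseteq> ball 0 1 \<inter> f -` U"
  proof
    fix s :: complex assume "s \<in> (\<lambda>t. of_real r * t) ` ball 0 1"
    then obtain t where t: "cmod t < 1" "s = of_real r * t" by auto
    then have "cmod s < r" using r by (simp add: norm_mult)
    then show "s \<in> ball 0 1 \<inter> f -` U" using fU r by auto
  qed
  have "((\<lambda>s. \<phi> (f s) $ i) \<circ> (\<lambda>t. of_real r * t)) holomorphic_on ball 0 1"
    by (rule holomorphic_on_compose_gen[OF h2 h1 sub])
  then have "(\<lambda>t. \<phi> (f (of_real r * t)) $ i + d $ i) holomorphic_on ball 0 1"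
    by (simp add: o_def holomorphic_intros)
  then show "(\<lambda>t. (\<phi> (f (of_real r * t)) + d) $ i) holomorphic_on ball 0 1" by simp
qed

lemma ereal_pos_lower: "0 < (x::ereal) \<Longrightarrow> \<exists>v>0. ereal v \<le> x"
  by (cases x) (auto intro: exI[of _ 1])

lemma kobayashi_chart_lower_bound:
  fixes \<phi> :: "'a::topological_space \<Rightarrow> complex ^ 'n"
  assumes atlas: "complex_atlas A" and UA: "(U,\<phi>) \<in> A" and R: "0 < R"
    and room: "cball q (2*R) \<subseteq> \<phi> ` U"
    and v: "ereal v \<le> kobayashi A x (inv_into U \<phi> q)"
    and q': "dist q q' < min (R/2) (R * v / 4)"
  shows "ereal (v / 2) \<le> kobayashi A x (inv_into U \<phi> q')"
proof (rule ccontr)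
  assume "\<not> ?thesis"
  then have less: "kobayashi A x (inv_into U \<phi> q') < ereal (v / 2)" by simp
  have d1: "dist q' q \<le> R/2" and d2: "dist q' q < R * v / 4"
    using q' by (simp_all add: dist_commute)
  have "cball q' R \<subseteq> cball q (2*R)"
  proof
    fix y assume "y \<in> cball q' R"
    then show "y \<in> cball q (2*R)"
      using d1 R dist_triangle[of q y q'] by (simp add: dist_commute)
  qed
  then have "ktilde A (inv_into U \<phi> q') (inv_into U \<phi> q) \<le> ereal (2 * dist q' q / R)"
    using room by (intro ktilde_chart_bound[OF atlas UA R _ d1]) blast
  then have "kobayashi A x (inv_into U \<phi> q) < ereal (v / 2 + 2 * dist q' q / R)"
    by (rule kobayashi_extend_less[OF less])
  also have "v / 2 + 2 * dist q' q / R < v" using d2 R by (simp add: field_simps)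
  finally show False using v by (simp add: not_le[symmetric])
qed

lemma kobayashi_bound_on_compact:
  fixes S :: "(complex ^ 'n) set" and \<phi> :: "'a::topological_space \<Rightarrow> complex ^ 'n"
  assumes atlas: "complex_atlas A" and UA: "(U,\<phi>) \<in> A" and R: "0 < R" and S: "compact S"
    and room: "\<And>q. q \<in> S \<Longrightarrow> cball q (2*R) \<subseteq> \<phi> ` U"
    and pos: "\<And>q. q \<in> S \<Longrightarrow> 0 < kobayashi A x (inv_into U \<phi> q)"
  shows "\<exists>\<delta>>0. \<forall>q\<in>S. ereal \<delta> \<le> kobayashi A x (inv_into U \<phi> q)"
proof -
  have "\<forall>q\<in>S. \<exists>v>0. ereal v \<le> kobayashi A x (inv_into U \<phi> q)"
    using pos ereal_pos_lower by blast
  then obtain v where v: "\<And>q. q \<in> S \<Longrightarrow> 0 < v q \<and> ereal (v q) \<le> kobayashi A x (inv_into U \<phi> q)"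
    by metis
  define \<eta> where "\<eta> q = min (R/2) (R * v q / 4)" for q
  obtain Q where Q: "Q \<subseteq> S" "finite Q" "S \<subseteq> (\<Union>q\<in>Q. ball q (\<eta> q))"
    by (rule compactE_image[OF S, of S "\<lambda>q. ball q (\<eta> q)"]) (auto simp: \<eta>_def v R)
  define \<delta> where "\<delta> = Min (insert 1 ((\<lambda>q. v q / 2) ` Q))"
  have "0 < \<delta>" unfolding \<delta>_def using Q v by (subst Min_gr_iff) auto
  moreover have "ereal \<delta> \<le> kobayashi A x (inv_into U \<phi> q')" if q': "q' \<in> S" for q'
  proof -
    obtain q where q: "q \<in> Q" "dist q q' < \<eta> q" using Q q' by auto
    have qS: "q \<in> S" using q Q by auto
    have "\<delta> \<le> v q / 2" unfolding \<delta>_def using q Q by (intro Min_le) auto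
    moreover have "ereal (v q / 2) \<le> kobayashi A x (inv_into U \<phi> q')"
      by (rule kobayashi_chart_lower_bound[OF atlas UA R room[OF qS]])
         (use v[OF qS] q in \<open>auto simp: \<eta>_def\<close>)
    ultimately show ?thesis by (meson ereal_less_eq(3) order.trans)
  qed
  ultimately show ?thesis by blast
qed

lemma kobayashi_barrier_in_chart:
  fixes \<phi> :: "'a::topological_space \<Rightarrow> complex ^ 'n"
  assumes atlas: "complex_atlas A" and UA: "(U,\<phi>) \<in> A" and zU: "z \<in> U" and hyp: "hyperbolic_at A z"
    and R: "0 < R" and room: "cball (\<phi> z) (4*R) \<subseteq> \<phi> ` U"
  shows "\<exists>\<delta>>0. \<forall>x\<in>U. \<phi> x \<in> sphere (\<phi> z) (2*R) \<longrightarrow> ereal \<delta> \<le> kobayashi A z x"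
proof -
  note cf = chart_props[OF atlas UA]
  have "\<exists>\<delta>>0. \<forall>q\<in>sphere (\<phi> z) (2*R). ereal \<delta> \<le> kobayashi A z (inv_into U \<phi> q)"
  proof (rule kobayashi_bound_on_compact[OF atlas UA R])
    fix q assume q: "q \<in> sphere (\<phi> z) (2*R)"
    show "cball q (2*R) \<subseteq> \<phi> ` U"
    proof
      fix y assume "y \<in> cball q (2*R)"
      then have "y \<in> cball (\<phi> z) (4*R)" using q dist_triangle[of "\<phi> z" y q] by simp
      then show "y \<in> \<phi> ` U" using room by blast
    qed
    moreover have "q \<in> cball q (2*R)" using R by simp
    ultimately have "\<phi> (inv_into U \<phi> q) = q" using cf(7) by blast
    moreover have "q \<noteq> \<phi> z" using q R by auto
    ultimately show "0 < kobayashi A z (inv_into U \<phi> q)"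
      using hyp unfolding hyperbolic_at_def by metis
  qed simp
  then show ?thesis using cf(6) by metis
qed

text \<open>Step (2): a connectedness argument locates the first exit of a disc from an open set B
  along a radius, in the boundary layer C - B.\<close>

lemma disc_exit_point:
  fixes f :: "complex \<Rightarrow> 'a::topological_space"
  assumes cont: "continuous_on (ball 0 1) f" and t: "t \<in> ball 0 1"
  and f0: "f 0 \<in> Bs" and ft: "f t \<notin> Bs" and oB: "open Bs" and cC: "closed Cs" and BC: "Bs \<subseteq> Cs"
  shows "\<exists>\<beta>\<in>closed_segment 0 t. f \<beta> \<in> Cs - Bs"
proof (rule ccontr)
  assume no: "\<not> ?thesis"
  have seg: "closed_segment 0 t \<subseteq> ball 0 1"
    using t convex_ball[of "0::complex" 1] by (simp add: convex_contains_segment)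
  have K: "connected (f ` closed_segment 0 t)"
    by (rule connected_continuous_image[OF continuous_on_subset[OF cont seg]]) simp
  have cov: "f ` closed_segment 0 t \<subseteq> Bs \<union> (- Cs)" using no by blast
  have dis: "Bs \<inter> (- Cs) \<inter> f ` closed_segment 0 t = {}" using BC by blast
  have "Bs \<inter> f ` closed_segment 0 t = {} \<or> (- Cs) \<inter> f ` closed_segment 0 t = {}"
    by (rule connectedD[OF K oB _ dis cov]) (use cC in auto)
  moreover have "f 0 \<in> Bs \<inter> f ` closed_segment 0 t" using f0 by auto
  moreover have "f t \<in> (- Cs) \<inter> f ` closed_segment 0 t" using no ft by auto
  ultimately show False by blast
qed

definition confines_discs ::
    "('a::topological_space set \<times> ('a \<Rightarrow> complex ^ 'n)) set \<Rightarrow> 'a \<Rightarrow> 'a set \<Rightarrow> real \<Rightarrow> real \<Rightarrow> bool"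
  where
  "confines_discs A z B \<delta> \<rho> \<longleftrightarrow> (\<forall>x f t. x \<in> B \<longrightarrow> kobayashi A z x < ereal (\<delta>/2) \<longrightarrow>
      holo_disc A f \<longrightarrow> f 0 = x \<longrightarrow> cmod t < \<rho> \<longrightarrow> f t \<in> B)"

lemma confines_discs_of_barrier:
  fixes B C :: "'a::topological_space set"
  assumes oB: "open B" and cC: "closed C" and BC: "B \<subseteq> C"
    and barrier: "\<And>y. y \<in> C - B \<Longrightarrow> ereal \<delta> \<le> kobayashi A z y"
  shows "confines_discs A z B \<delta> (min (1/2) (\<delta>/4))"
  unfolding confines_discs_def
proof (intro allI impI)
  fix x f t
  assume xB: "x \<in> B" and kx: "kobayashi A z x < ereal (\<delta>/2)"
    and hf: "holo_disc A f" and f0: "f 0 = x" and t: "cmod t < min (1/2) (\<delta>/4)"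
  show "f t \<in> B"
  proof (rule ccontr)
    assume nt: "f t \<notin> B"
    have tb: "t \<in> ball 0 1" using t by simp
    have fc: "continuous_on (ball 0 1) f" using hf by (simp add: holo_disc_def)
    obtain \<beta> where \<beta>: "\<beta> \<in> closed_segment 0 t" "f \<beta> \<in> C - B"
      using disc_exit_point[OF fc tb _ nt oB cC BC] xB f0 by blast
    have nb: "cmod \<beta> \<le> cmod t" using segment_bound1[OF \<beta>(1)] by simp
    have bb: "\<beta> \<in> ball 0 1" using nb t by simp
    have "ktilde A x (f \<beta>) \<le> ereal (artanh (cmod \<beta>))" by (rule ktilde_le_disc[OF hf bb f0 refl])
    also have "artanh (cmod \<beta>) \<le> 2 * cmod \<beta>" using nb t by (intro artanh_le_2x) auto
    finally have "kobayashi A z (f \<beta>) < ereal (\<delta>/2 + 2 * cmod \<beta>)"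
      by (intro kobayashi_extend_less[OF kx]) simp
    also have "\<delta>/2 + 2 * cmod \<beta> \<le> \<delta>" using nb t by simp
    finally show False using barrier[OF \<beta>(2)] by (simp add: not_le[symmetric])
  qed
qed

lemma chart_ball_confines_discs:
  fixes \<phi> :: "'a::t2_space \<Rightarrow> complex ^ 'n"
  assumes atlas: "complex_atlas A" and UA: "(U,\<phi>) \<in> A" and R: "0 < R"
    and room: "cball p (4*R) \<subseteq> \<phi> ` U"
    and barrier: "\<And>x. x \<in> U \<Longrightarrow> \<phi> x \<in> sphere p (2*R) \<Longrightarrow> ereal \<delta> \<le> kobayashi A z x"
  shows "confines_discs A z (inv_into U \<phi> ` ball p (2*R)) \<delta> (min (1/2) (\<delta>/4))"
proof (rule confines_discs_of_barrier)
  have ball_room: "ball p (2*R) \<subseteq> \<phi> ` U" "cball p (2*R) \<subseteq> \<phi> ` U" using room R by auto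
  define C where "C = inv_into U \<phi> ` cball p (2*R)"
  have B_iff: "x \<in> inv_into U \<phi> ` ball p (2*R) \<longleftrightarrow> x \<in> U \<and> \<phi> x \<in> ball p (2*R)" for x
    using chart_image_iff[OF atlas UA ball_room(1)] by simp
  have C_iff: "x \<in> C \<longleftrightarrow> x \<in> U \<and> \<phi> x \<in> cball p (2*R)" for x
    unfolding C_def using chart_image_iff[OF atlas UA ball_room(2)] by simp
  show "open (inv_into U \<phi> ` ball p (2*R))" using chart_image_open[OF atlas UA ball_room(1)] by simp
  have "compact C" unfolding C_def
    by (rule compact_continuous_image[OF continuous_on_subset[OF chart_props(5)[OF atlas UA]
          ball_room(2)]]) simp
  then show "closed C" by (rule compact_imp_closed)
  show "inv_into U \<phi> ` ball p (2*R) \<subseteq> C" unfolding C_def by (intro image_mono ball_subset_cball)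
  show "ereal \<delta> \<le> kobayashi A z y" if "y \<in> C - inv_into U \<phi> ` ball p (2*R)" for y
    using that B_iff C_iff barrier by auto
qed

lemma disc_chain_stays_inside:
  fixes m :: nat
  assumes confines: "confines_discs A z B \<delta> \<rho>"
    and start: "xs 0 \<in> B" "kobayashi A z (xs 0) < ereal (\<delta>/4)"
    and chain: "disc_chain A m xs f \<alpha>"
    and short: "(\<Sum>j\<in>{1..m}. artanh (cmod (\<alpha> j))) < c" "c \<le> \<delta>/4" "c \<le> \<rho>/2"
    and j: "j \<le> m"
  shows "xs j \<in> B \<and> kobayashi A z (xs j) < ereal (\<delta>/2)"
proof -
  define P where "P j = (\<Sum>i\<in>{1..j}. artanh (cmod (\<alpha> i)))" for j
  have P_less: "P j < c" if "j \<le> m" for j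
  proof -
    have "P j \<le> P m" unfolding P_def using that chain
      by (intro sum_mono2 artanh_nonneg_real) (auto simp: disc_chain_def)
    then show ?thesis using short(1) by (simp add: P_def)
  qed
  have radius: "cmod (\<alpha> j) < \<rho>" if "j \<in> {1..m}" for j
    using disc_radius_le_chain_length[OF chain that] short by auto
  have invariant: "xs j \<in> B \<and> kobayashi A z (xs j) < ereal (\<delta>/4 + P j)" if "j \<le> m" for j
    using that
  proof (induction j)
    case 0 then show ?case using start by (simp add: P_def)
  next
    case (Suc j)
    then have IH: "xs j \<in> B" "kobayashi A z (xs j) < ereal (\<delta>/4 + P j)" by auto
    have jm: "Suc j \<in> {1..m}" using Suc by simp
    then have disc: "\<alpha> (Suc j) \<in> ball 0 1" "holo_disc A (f (Suc j))" "f (Suc j) 0 = xs j"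
      "f (Suc j) (\<alpha> (Suc j)) = xs (Suc j)" using chain by (auto simp: disc_chain_def)
    have "\<delta>/4 + P j \<le> \<delta>/2" using P_less[of j] Suc.prems short by simp
    then have "kobayashi A z (xs j) < ereal (\<delta>/2)" using IH(2) by (simp add: order_less_le_trans)
    then have "xs (Suc j) \<in> B"
      using confines IH(1) disc(2,3,4) radius[OF jm] unfolding confines_discs_def by metis
    moreover have "kobayashi A z (xs (Suc j)) < ereal (\<delta>/4 + P j + artanh (cmod (\<alpha> (Suc j))))"
      by (rule kobayashi_extend_less[OF IH(2) ktilde_le_disc[OF disc(2,1,3,4)]])
    ultimately show ?case by (simp add: P_def add.assoc)
  qed
  have "\<delta>/4 + P j \<le> \<delta>/2" using P_less[OF j] short by simp
  then show ?thesis using invariant[OF j] by (meson ereal_less_eq(3) order_less_le_trans)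
qed

lemma kobayashi_translated_chain:
  fixes m :: nat and d :: "complex ^ 'n" and \<phi> :: "'a::topological_space \<Rightarrow> complex ^ 'n"
  assumes atlas: "complex_atlas A" and UA: "(U,\<phi>) \<in> A" and \<rho>: "0 < \<rho>" "\<rho> \<le> 1"
    and chain: "disc_chain A m xs f \<alpha>"
    and small: "\<And>j. j \<in> {1..m} \<Longrightarrow> cmod (\<alpha> j) \<le> \<rho>/2"
    and inside: "\<And>j t. j \<in> {1..m} \<Longrightarrow> cmod t < \<rho> \<Longrightarrow> f j t \<in> U \<and> \<phi> (f j t) + d \<in> \<phi> ` U"
  shows "kobayashi A (inv_into U \<phi> (\<phi> (xs 0) + d)) (inv_into U \<phi> (\<phi> (xs m) + d))
           \<le> ereal (4/\<rho> * (\<Sum>j\<in>{1..m}. artanh (cmod (\<alpha> j))))"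
proof -
  define g where "g j t = inv_into U \<phi> (\<phi> (f j (of_real \<rho> * t)) + d)" for j t
  define \<alpha>' where "\<alpha>' j = \<alpha> j / of_real \<rho>" for j
  define ys where "ys j = inv_into U \<phi> (\<phi> (xs j) + d)" for j
  have norm_\<alpha>': "cmod (\<alpha>' j) = cmod (\<alpha> j) / \<rho>" for j
    using \<rho> by (simp add: \<alpha>'_def norm_divide)
  have "disc_chain A m ys g \<alpha>'"
    unfolding disc_chain_def
  proof (intro ballI conjI)
    fix j assume j: "j \<in> {1..m}"
    show "\<alpha>' j \<in> ball 0 1" using small[OF j] \<rho> by (simp add: norm_\<alpha>' field_simps)
    show "holo_disc A (g j)" unfolding g_def
      by (rule holo_disc_rescale_translate[OF atlas UA _ \<rho>])
         (use chain j inside in \<open>auto simp: disc_chain_def\<close>)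
    show "g j 0 = ys (j - 1)" "g j (\<alpha>' j) = ys j"
      using chain j \<rho> by (simp_all add: g_def ys_def \<alpha>'_def disc_chain_def)
  qed
  then have "kobayashi A (ys 0) (ys m) \<le> ereal (\<Sum>j\<in>{1..m}. artanh (cmod (\<alpha>' j)))"
    by (rule kobayashi_le_disc_chain)
  also have "(\<Sum>j\<in>{1..m}. artanh (cmod (\<alpha>' j))) \<le> (\<Sum>j\<in>{1..m}. 4/\<rho> * artanh (cmod (\<alpha> j)))"
  proof (rule sum_mono)
    fix j assume j: "j \<in> {1..m}"
    have "artanh (cmod (\<alpha>' j)) \<le> 2 * (cmod (\<alpha> j) / \<rho>)"
      unfolding norm_\<alpha>' using small[OF j] \<rho> by (intro artanh_le_2x) (auto simp: field_simps)
    also have "\<dots> \<le> 4/\<rho> * artanh (cmod (\<alpha> j))"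
      using artanh_ge_half[of "cmod (\<alpha> j)"] chain j \<rho> by (auto simp: field_simps disc_chain_def)
    finally show "artanh (cmod (\<alpha>' j)) \<le> 4/\<rho> * artanh (cmod (\<alpha> j))" .
  qed
  finally show ?thesis by (simp add: ys_def sum_distrib_left)
qed

lemma short_chain_transported:
  fixes m :: nat and \<phi> :: "'a::topological_space \<Rightarrow> complex ^ 'n"
  assumes atlas: "complex_atlas A" and UA: "(U,\<phi>) \<in> A" and zU: "z \<in> U"
    and BU: "B \<subseteq> U" and z'B: "z' \<in> B"
    and shift: "\<And>x. x \<in> B \<Longrightarrow> \<phi> x + (\<phi> z - \<phi> z') \<in> \<phi> ` U"
    and confines: "confines_discs A z B \<delta> \<rho>" and \<rho>: "0 < \<rho>" "\<rho> \<le> 1"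
    and close: "kobayashi A z z' < ereal (\<delta>/4)"
    and xs0: "xs 0 = z'" and chain: "disc_chain A m xs f \<alpha>"
    and short: "(\<Sum>j\<in>{1..m}. artanh (cmod (\<alpha> j))) < c" "c \<le> \<delta>/4" "c \<le> \<rho>/4"
  shows "xs m \<in> B \<and> kobayashi A z (inv_into U \<phi> (\<phi> (xs m) + (\<phi> z - \<phi> z')))
           \<le> ereal (4/\<rho> * (\<Sum>j\<in>{1..m}. artanh (cmod (\<alpha> j))))"
proof -
  have confined: "xs j \<in> B \<and> kobayashi A z (xs j) < ereal (\<delta>/2)" if "j \<le> m" for j
    by (rule disc_chain_stays_inside[OF confines _ _ chain short(1,2) _ that])
       (use xs0 z'B close short(3) \<rho> in auto)
  have small: "cmod (\<alpha> j) \<le> \<rho>/2" if "j \<in> {1..m}" for j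
    using disc_radius_le_chain_length[OF chain that] short by auto
  have discs_inside: "f j t \<in> U \<and> \<phi> (f j t) + (\<phi> z - \<phi> z') \<in> \<phi> ` U"
    if j: "j \<in> {1..m}" and t: "cmod t < \<rho>" for j t
  proof -
    have "holo_disc A (f j)" "f j 0 = xs (j - 1)" using chain j by (auto simp: disc_chain_def)
    moreover have "xs (j - 1) \<in> B" "kobayashi A z (xs (j - 1)) < ereal (\<delta>/2)"
      using confined[of "j - 1"] j by auto
    ultimately have "f j t \<in> B" using confines t unfolding confines_discs_def by blast
    then show ?thesis using BU shift by auto
  qed
  show ?thesis
    using kobayashi_translated_chain[OF atlas UA \<rho> chain small discs_inside]
      confined[of m] chart_props(6)[OF atlas UA zU] xs0 by simp
qed

lemma hyperbolic_at_near_base_point: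
  fixes \<phi> :: "'a::topological_space \<Rightarrow> complex ^ 'n"
  assumes atlas: "complex_atlas A" and UA: "(U,\<phi>) \<in> A" and zU: "z \<in> U" and hyp: "hyperbolic_at A z"
    and BU: "B \<subseteq> U" and z'B: "z' \<in> B"
    and shift: "\<And>x. x \<in> B \<Longrightarrow> \<phi> x + (\<phi> z - \<phi> z') \<in> \<phi> ` U"
    and confines: "confines_discs A z B \<delta> \<rho>"
    and \<delta>: "0 < \<delta>" and \<rho>: "0 < \<rho>" "\<rho> \<le> 1"
    and close: "kobayashi A z z' < ereal (\<delta>/4)"
  shows "hyperbolic_at A z'"
  unfolding hyperbolic_at_def
proof (intro allI impI)
  fix w assume wz': "w \<noteq> z'"
  define y where "y = inv_into U \<phi> (\<phi> w + (\<phi> z - \<phi> z'))"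
  note cf = chart_props[OF atlas UA]
  obtain K where K: "0 < K" "w \<in> B \<Longrightarrow> ereal K \<le> kobayashi A z y"
  proof (cases "w \<in> B")
    case True
    have "\<phi> y = \<phi> w + (\<phi> z - \<phi> z')" using cf(7) shift[OF True] by (simp add: y_def)
    moreover have "\<phi> w \<noteq> \<phi> z'" using cf(3) BU True z'B wz' by (meson inj_on_def subsetD)
    ultimately have "y \<noteq> z" by auto
    then show ?thesis using that hyp ereal_pos_lower by (meson hyperbolic_at_def)
  next
    case False
    then show ?thesis using that[of 1] by simp
  qed
  define c where "c = min (\<delta>/4) (min (\<rho>/4) (\<rho> * K / 4))"
  have c: "0 < c" using \<delta> \<rho> K by (simp add: c_def)
  have "ereal c \<le> kobayashi A z' w"
  proof (rule kobayashi_ge_of_chains)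
    fix m :: nat and xs f \<alpha>
    assume xs0: "xs 0 = z'" and xsm: "xs m = w" and chain: "disc_chain A m xs f \<alpha>"
      and short: "(\<Sum>j\<in>{1..m}. artanh (cmod (\<alpha> j))) < c"
    have wB: "w \<in> B"
      and "kobayashi A z y \<le> ereal (4/\<rho> * (\<Sum>j\<in>{1..m}. artanh (cmod (\<alpha> j))))"
      using short_chain_transported[OF atlas UA zU BU z'B shift confines \<rho> close xs0 chain short]
      by (auto simp: c_def xsm y_def)
    note this(2)
    also have "4/\<rho> * (\<Sum>j\<in>{1..m}. artanh (cmod (\<alpha> j))) < 4/\<rho> * c"
      using short \<rho> by (simp add: divide_strict_right_mono)
    also have "4/\<rho> * c \<le> K" using \<rho> by (simp add: c_def field_simps)
    finally show False using K(2)[OF wB] by (simp add: not_le[symmetric])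
  qed
  then show "0 < kobayashi A z' w" using c by (meson ereal_less(2) less_le_trans)
qed

lemma hyperbolic_neighbourhood_in_chart:
  fixes \<phi> :: "'a::t2_space \<Rightarrow> complex ^ 'n"
  assumes atlas: "complex_atlas A" and UA: "(U,\<phi>) \<in> A" and zU: "z \<in> U" and hyp: "hyperbolic_at A z"
    and R: "0 < R" and room: "cball (\<phi> z) (4*R) \<subseteq> \<phi> ` U"
  shows "\<exists>W. open W \<and> z \<in> W \<and> (\<forall>z'\<in>W. hyperbolic_at A z')"
proof -
  define p where "p = \<phi> z"
  define B where "B = inv_into U \<phi> ` ball p (2*R)"
  have ball_room: "ball p r \<subseteq> \<phi> ` U" "cball p r \<subseteq> \<phi> ` U" if "r \<le> 4*R" for r
    using room that by (auto simp: p_def)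
  obtain \<delta> where \<delta>: "0 < \<delta>"
    and barrier: "\<And>x. x \<in> U \<Longrightarrow> \<phi> x \<in> sphere p (2*R) \<Longrightarrow> ereal \<delta> \<le> kobayashi A z x"
    using kobayashi_barrier_in_chart[OF atlas UA zU hyp R room] by (auto simp: p_def)
  have confines: "confines_discs A z B \<delta> (min (1/2) (\<delta>/4))"
    unfolding B_def using chart_ball_confines_discs[OF atlas UA R _ barrier] room by (simp add: p_def)
  have B_iff: "x \<in> B \<longleftrightarrow> x \<in> U \<and> \<phi> x \<in> ball p (2*R)" for x
    unfolding B_def using chart_image_iff[OF atlas UA ball_room(1)] R by simp
  define r where "r = R * min 1 (\<delta>/8)"
  have r: "0 < r" "r \<le> R" "r \<le> R * (\<delta>/8)" using R \<delta> by (auto simp: r_def)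
  define W where "W = inv_into U \<phi> ` ball p r"
  have W_iff: "x \<in> W \<longleftrightarrow> x \<in> U \<and> \<phi> x \<in> ball p r" for x
    unfolding W_def using chart_image_iff[OF atlas UA ball_room(1)] r R by simp
  have "open W" unfolding W_def using chart_image_open[OF atlas UA ball_room(1)] r R by simp
  moreover have "z \<in> W" using W_iff zU r by (simp add: p_def)
  moreover have "hyperbolic_at A z'" if "z' \<in> W" for z'
  proof (rule hyperbolic_at_near_base_point[OF atlas UA zU hyp _ _ _ confines \<delta>])
    have z': "z' \<in> U" "dist p (\<phi> z') < r" using W_iff that by auto
    show "B \<subseteq> U" "z' \<in> B" using B_iff z' r R by auto
    show "\<phi> x + (\<phi> z - \<phi> z') \<in> \<phi> ` U" if "x \<in> B" for x
    proof -
      have "dist p (\<phi> x + (p - \<phi> z')) < 3*R"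
        using B_iff[of x] that z' r dist_triangle[of p "\<phi> x + (p - \<phi> z')" "\<phi> x"]
        by (simp add: dist_norm norm_minus_commute)
      then show ?thesis using ball_room(1)[of "3*R"] R by (auto simp: p_def)
    qed
    have "ktilde A (inv_into U \<phi> p) (inv_into U \<phi> (\<phi> z')) \<le> ereal (2 * dist p (\<phi> z') / (2*R))"
      by (rule ktilde_chart_bound[OF atlas UA _ ball_room(2)]) (use R z' r in auto)
    then have "kobayashi A z z' \<le> ereal (2 * dist p (\<phi> z') / (2*R))"
      using kobayashi_le_ktilde[of A z z'] chart_props(6)[OF atlas UA] zU z' by (simp add: p_def)
    also have "2 * dist p (\<phi> z') / (2*R) < \<delta>/4"
      using z' r R by (simp add: field_simps)
    finally show "kobayashi A z z' < ereal (\<delta>/4)" by simp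
  qed (use \<delta> in auto)
  ultimately show ?thesis by blast
qed

theorem mainTheorem6:
  fixes A :: "('a::{t2_space, second_countable_topology} set \<times> ('a \<Rightarrow> complex ^ 'n)) set"
    and z :: 'a
  assumes "complex_atlas A"
    and "hyperbolic_at A z"
  shows "\<exists>W. open W \<and> z \<in> W \<and> (\<forall>z'\<in>W. hyperbolic_at A z')"
proof -
  have "z \<in> \<Union> (fst ` A)" using assms(1) by (simp add: complex_atlas_def)
  then obtain U \<phi> where chart: "(U,\<phi>) \<in> A" and zU: "z \<in> U" by auto
  have "open (\<phi> ` U)" using chart_props(2)[OF assms(1) chart] .
  then obtain e where e: "0 < e" "cball (\<phi> z) e \<subseteq> \<phi> ` U"
    using zU open_contains_cball by blast
  show ?thesis
    by (rule hyperbolic_neighbourhood_in_chart[OF assms(1) chart zU assms(2), of "e/4"]) (use e in auto)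
qed

end
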